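(* Let $\mathcal{G}=(N,\mathcal{W})$ be an SVG, let $i\neq j$ be players with $j$ a YES-blocker of $\mathcal{G}$, and let $\hat{\mathcal{G}}=\mathcal{G}^{j\to i}$. Let $S\subseteq N\setminus\{i,j\}$ satisfy $S\cup\{i,j\}\notin\mathcal{W}$. Then $$\hat\alpha^-_i(S\cup\{j\})\le \alpha^-_i(S\cup\{j\})+\alpha^-_j(S\cup\{i\}),$$ where $\alpha^-$ denotes NO-efficacy scores of the Recursive Measure in $\mathcal{G}$, and $\hat\alpha^-$ denotes the same in $\hat{\mathcal{G}}$.
   Context: A simple voting game (SVG) is a pair $\mathcal{G}=(N,\mathcal{W})$ with $N$ a nonempty finite set of players and $\mathcal{W}\subseteq 2^N$ monotone, $\emptyset\notin\mathcal{W}$, $N\in\mathcal{W}$. Divisions are identified with their YES-sets $S\subseteq N$; $S$ is winning iff $S\in\mathcal{W}$. Decisiveness and success: - Player $k$ is YES-decisive in $S$ if $k\in S\in\mathcal{W}$ and $S\setminus\{k\}\notin\mathcal{W}$. - Player $k$ is NO-decisive in $S$ if $k\notin S\notin\mathcal{W}$ and $S\cup\{k\}\in\mathcal{W}$. - Player $k$ is successful in $S$ if ($k\in S\in\mathcal{W}$) or ($k\notin S\notin\mathcal{W}$). Loyal children: if $S\in\mathcal{W}$, they are the sets $S\setminus\{m\}\in\mathcal{W}$ with $m\in S$. If $S\notin\mathcal{W}$, they are the sets $S\cup\{m\}\notin\mathcal{W}$ with $m\notin S$. Recursive efficacy score $\alpha_k(S)$: - $\alpha_k(S)=1$ if $k$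 is YES- or NO-decisive in $S$; - $\alpha_k(S)=0$ if $k$ is not successful; - otherwise, the average of $\alpha_k$ over the loyal children of $S$. The NO-efficacy score is $\alpha^-_k(S)=\alpha_k(S)$ if $k\notin S$ and $0$ if $k\in S$. Blockers: $j$ is a YES-blocker if $j\in S$ for all $S\in\mathcal{W}$. Donation game: $\mathcal{G}^{j\to i}$ is the SVG on $N$ in which, for $S\subseteq N\setminus\{i,j\}$: - $S\cup\{i,j\}$ and $S\cup\{i\}$ are winning iff $S\cup\{i,j\}\in\mathcal{W}$; - $S\cup\{j\}$ and $S$ are winning iff $S\in\mathcal{W}$. *)

theory Defs
  imports Complex_Main
begin

definition svg :: "'a set \<Rightarrow> 'a set set \<Rightarrow> bool" where
  "svg N W \<longleftrightarrow> finite N \<and> N \<noteq> {} \<and> W \<subseteq> Pow N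
     \<and> (\<forall>S T. S \<in> W \<and> S \<subseteq> T \<and> T \<subseteq> N \<longrightarrow> T \<in> W)
     \<and> {} \<notin> W \<and> N \<in> W"

definition yes_decisive :: "'a set set \<Rightarrow> 'a \<Rightarrow> 'a set \<Rightarrow> bool" where
  "yes_decisive W k S \<longleftrightarrow> k \<in> S \<and> S \<in> W \<and> S - {k} \<notin> W"

definition no_decisive :: "'a set set \<Rightarrow> 'a \<Rightarrow> 'a set \<Rightarrow> bool" where
  "no_decisive W k S \<longleftrightarrow> k \<notin> S \<and> S \<notin> W \<and> S \<union> {k} \<in> W"

definition successful :: "'a set set \<Rightarrow> 'a \<Rightarrow> 'a set \<Rightarrow> bool" where
  "successful W k S \<longleftrightarrow> (k \<in> S \<and> S \<in> W) \<or> (k \<notin> S \<and> S \<notin> W)"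

definition loyal_children :: "'a set \<Rightarrow> 'a set set \<Rightarrow> 'a set \<Rightarrow> 'a set set" where
  "loyal_children N W S =
     (if S \<in> W then {S - {m} | m. m \<in> S \<and> S - {m} \<in> W}
      else {S \<union> {m} | m. m \<in> N - S \<and> S \<union> {m} \<notin> W})"

definition alpha_measure :: "'a set \<Rightarrow> 'a set set \<Rightarrow> 'a set \<Rightarrow> nat" where
  "alpha_measure N W S = (if S \<in> W then card S else card (N - S))"

lemma loyal_children_dec:
  assumes "finite N" "S \<subseteq> N" "T \<in> loyal_children N W S"
  shows "alpha_measure N W T < alpha_measure N W S"
proof (cases "S \<in> W")
  case True
  then obtain m where "m \<in> S" "T = S - {m}" "T \<in> W"
    using assms(3) by (auto simp: loyal_children_def)
  moreover have "finite S" using assms finite_subset by blast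
  moreover have "card S > 0" using \<open>m \<in> S\<close> \<open>finite S\<close> card_gt_0_iff by blast
  ultimately show ?thesis using True
    by (simp add: alpha_measure_def)
next
  case False
  then obtain m where "m \<in> N - S" "T = S \<union> {m}" "T \<notin> W"
    using assms(3) by (auto simp: loyal_children_def)
  moreover have "N - (S \<union> {m}) = (N - S) - {m}" by blast
  moreover have "card (N - S) > 0" using \<open>m \<in> N - S\<close> assms(1) card_gt_0_iff by blast
  ultimately show ?thesis using False assms(1)
    by (simp add: alpha_measure_def)
qed

text \<open>Recursive efficacy score alpha_k(S) (the Recursive Measure); only meaningful for
  finite N and divisions S \<subseteq> N (set to 0 otherwise).\<close>
function alpha :: "'a set \<Rightarrow> 'a set set \<Rightarrow> 'a \<Rightarrow> 'a set \<Rightarrow> real" where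
  "alpha N W k S =
     (if \<not> finite N \<or> \<not> S \<subseteq> N then 0
      else if yes_decisive W k S \<or> no_decisive W k S then 1
      else if \<not> successful W k S then 0
      else (\<Sum>T\<in>loyal_children N W S. alpha N W k T) / real (card (loyal_children N W S)))"
  by pat_completeness auto
termination
  by (relation "measure (\<lambda>(N, W, k, S). alpha_measure N W S)")
     (auto intro: loyal_children_dec)

definition alpha_no :: "'a set \<Rightarrow> 'a set set \<Rightarrow> 'a \<Rightarrow> 'a set \<Rightarrow> real" where
  "alpha_no N W k S = (if k \<in> S then 0 else alpha N W k S)"

definition yes_blocker :: "'a set set \<Rightarrow> 'a \<Rightarrow> bool" where
  "yes_blocker W j \<longleftrightarrow> (\<forall>S\<in>W. j \<in> S)"

definition donation :: "'a set \<Rightarrow> 'a set set \<Rightarrow> 'a \<Rightarrow> 'a \<Rightarrow> 'a set set" where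
  "donation N W j i =
     {T. T \<subseteq> N \<and> (if i \<in> T then T \<union> {j} \<in> W else T - {j} \<in> W)}"

end

theory Submission
  imports Defs
begin

text \<open>Induction on the number of NO-voters. In a losing division where neither i nor j is
  pivotal, all three scores are averages over one-player extensions, each with one extra zero
  term (a player joining the YES side of a losing division is unsuccessful). Because j is a
  YES-blocker, i's losing extensions in the donation game and j's losing extensions in the
  original game both consist of all remaining players m, while i's losing extensions in the
  original game are only some of them. For each such m the scores satisfy the claimed inequality
  with m added: by induction if the grand coalition with m still loses, and otherwise because
  i is NO-decisive in the donation game and one of i, j is NO-decisive in the original game.
  Averaging over fewer terms only increases i's original score.\<close>

declare alpha.simps[simp del]

lemma alpha_nonneg: "0 \<le> alpha N W k S"
proof (induction N W k S rule: alpha.induct)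
  case (1 N W k S)
  show ?case
    by (subst alpha.simps) (use 1 in \<open>auto intro!: divide_nonneg_nonneg sum_nonneg\<close>)
qed

lemma alpha_eq_0_if_not_successful: "\<not> successful W k S \<Longrightarrow> alpha N W k S = 0"
  by (subst alpha.simps) (auto simp: yes_decisive_def no_decisive_def successful_def)

lemma alpha_eq_1_if_no_decisive:
  "finite N \<Longrightarrow> S \<subseteq> N \<Longrightarrow> no_decisive W k S \<Longrightarrow> alpha N W k S = 1"
  by (subst alpha.simps) simp

lemma alpha_losing_not_pivotal:
  assumes "finite N" "S \<subseteq> N" "k \<in> N - S" "S \<notin> W" "S \<union> {k} \<notin> W"
  defines "D \<equiv> {m \<in> N - S - {k}. S \<union> {m} \<notin> W}"
  shows "alpha N W k S = (\<Sum>m\<in>D. alpha N W k (S \<union> {m})) / real (card D + 1)"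
proof -
  let ?ext = "\<lambda>m. S \<union> {m}"
  have children: "loyal_children N W S = ?ext ` insert k D"
    using assms by (auto simp: loyal_children_def D_def)
  have inj: "inj_on ?ext (insert k D)"
    using assms(3) by (auto simp: inj_on_def D_def)
  have finD: "finite D" and kD: "k \<notin> D"
    using assms(1) by (auto simp: D_def)
  have own_child: "alpha N W k (S \<union> {k}) = 0"
    using assms(5) by (simp add: alpha_eq_0_if_not_successful successful_def)
  have "alpha N W k S
      = (\<Sum>T\<in>loyal_children N W S. alpha N W k T) / real (card (loyal_children N W S))"
    by (subst alpha.simps)
       (use assms in \<open>simp add: yes_decisive_def no_decisive_def successful_def\<close>)
  also have "\<dots> = (\<Sum>m\<in>insert k D. alpha N W k (S \<union> {m})) / real (card (insert k D))"
    unfolding children sum.reindex[OF inj] card_image[OF inj] o_def ..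
  finally show ?thesis
    using finD kD own_child by simp
qed

lemma average_le_average_add:
  fixes f g h :: "'b \<Rightarrow> real"
  assumes "finite R" "L \<subseteq> R"
    and "\<And>m. m \<in> R \<Longrightarrow> f m \<le> (if m \<in> L then g m else 0) + h m"
    and "\<And>m. m \<in> L \<Longrightarrow> 0 \<le> g m"
  shows "sum f R / real (card R + 1) \<le> sum g L / real (card L + 1) + sum h R / real (card R + 1)"
proof -
  have "sum f R \<le> (\<Sum>m\<in>R. (if m \<in> L then g m else 0) + h m)"
    using assms(3) by (rule sum_mono)
  also have "\<dots> = sum g L + sum h R"
    using assms(1,2) by (simp add: sum.distrib sum.inter_restrict[symmetric] Int_absorb1)
  finally have "sum f R / real (card R + 1) \<le> sum g L / real (card R + 1) + sum h R / real (card R + 1)"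
    by (simp add: divide_right_mono flip: add_divide_distrib)
  also have "sum g L / real (card R + 1) \<le> sum g L / real (card L + 1)"
    using assms by (intro divide_left_mono sum_nonneg) (auto intro: card_mono)
  finally show ?thesis by simp
qed

lemma donation_iff_if_yes_blocker:
  assumes "yes_blocker W j" "U \<subseteq> N"
  shows "U \<in> donation N W j i \<longleftrightarrow> i \<in> U \<and> U \<union> {j} \<in> W"
  using assms by (auto simp: donation_def yes_blocker_def)

text \<open>V plays the donation game of W, in the form it takes when j is a YES-blocker.\<close>
locale blocker_donation =
  fixes N :: "'a set" and W V :: "'a set set" and i j :: 'a
  assumes finite_players: "finite N"
    and mono: "\<And>A B. A \<in> W \<Longrightarrow> A \<subseteq> B \<Longrightarrow> B \<subseteq> N \<Longrightarrow> B \<in> W"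
    and blocker: "\<And>A. A \<in> W \<Longrightarrow> j \<in> A"
    and donation_iff: "\<And>U. U \<subseteq> N \<Longrightarrow> U \<in> V \<longleftrightarrow> i \<in> U \<and> U \<union> {j} \<in> W"
    and i_in: "i \<in> N" and j_in: "j \<in> N" and i_neq_j: "i \<noteq> j"
begin

lemma scores_le_if_grand_coalition_wins:
  assumes U: "U \<subseteq> N - {i, j}" and wins: "U \<union> {i, j} \<in> W"
  shows "alpha N V i (U \<union> {j})
    \<le> (if U \<union> {j} \<in> W then 0 else alpha N W i (U \<union> {j})) + alpha N W j (U \<union> {i})"
proof -
  have sub: "U \<union> {j} \<subseteq> N" "U \<union> {i} \<subseteq> N" "U \<union> {j} \<union> {i} \<subseteq> N"
    using U i_in j_in by auto
  have grand: "U \<union> {j} \<union> {i} = U \<union> {i, j}" "U \<union> {i} \<union> {j} = U \<union> {i, j}" by auto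
  have "U \<union> {j} \<union> {i} \<union> {j} = U \<union> {i, j}" by auto
  then have "U \<union> {j} \<union> {i} \<in> V"
    using donation_iff[OF sub(3)] wins by simp
  moreover have "U \<union> {j} \<notin> V"
    using donation_iff[OF sub(1)] U i_neq_j by auto
  ultimately have "no_decisive V i (U \<union> {j})"
    using U i_neq_j by (auto simp: no_decisive_def)
  then have V_score: "alpha N V i (U \<union> {j}) = 1"
    using alpha_eq_1_if_no_decisive[OF finite_players sub(1)] by simp
  show ?thesis
  proof (cases "U \<union> {j} \<in> W")
    case True
    then have "U \<union> {i} \<union> {j} \<in> W"
      using mono[of "U \<union> {j}" "U \<union> {i} \<union> {j}"] sub by auto
    then have "no_decisive W j (U \<union> {i})"
      using U i_neq_j blocker by (auto simp: no_decisive_def)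
    then show ?thesis
      using True V_score alpha_eq_1_if_no_decisive[OF finite_players sub(2)] by simp
  next
    case False
    then have "no_decisive W i (U \<union> {j})"
      using U wins by (auto simp: no_decisive_def grand)
    then show ?thesis
      using False V_score alpha_eq_1_if_no_decisive[OF finite_players sub(1)] alpha_nonneg
      by simp
  qed
qed

lemma scores_as_averages:
  assumes "T \<subseteq> N - {i, j}" "T \<union> {i, j} \<notin> W"
  defines "R \<equiv> N - T - {i, j}"
  defines "L \<equiv> {m \<in> R. T \<union> {j} \<union> {m} \<notin> W}"
  shows "alpha N V i (T \<union> {j}) = (\<Sum>m\<in>R. alpha N V i (T \<union> {j} \<union> {m})) / real (card R + 1)"
    and "alpha N W i (T \<union> {j}) = (\<Sum>m\<in>L. alpha N W i (T \<union> {j} \<union> {m})) / real (card L + 1)"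
    and "alpha N W j (T \<union> {i}) = (\<Sum>m\<in>R. alpha N W j (T \<union> {i} \<union> {m})) / real (card R + 1)"
proof -
  have T: "T \<subseteq> N" "i \<notin> T" "j \<notin> T" using assms(1) by auto
  have grand: "T \<union> {j} \<union> {i} = T \<union> {i, j}" "T \<union> {i} \<union> {j} = T \<union> {i, j}" by auto
  have T_j: "T \<union> {j} \<subseteq> N" "T \<union> {j} \<notin> W"
    using mono[of "T \<union> {j}" "T \<union> {i, j}"] assms(2) T i_in j_in by auto
  have T_i: "T \<union> {i} \<subseteq> N" "T \<union> {i} \<notin> W"
    using T blocker i_in i_neq_j by auto
  have "{m \<in> N - (T \<union> {j}) - {i}. T \<union> {j} \<union> {m} \<notin> V} = R"
    using donation_iff T j_in i_neq_j by (auto simp: R_def)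
  moreover have "alpha N V i (T \<union> {j})
      = (\<Sum>m\<in>{m \<in> N - (T \<union> {j}) - {i}. T \<union> {j} \<union> {m} \<notin> V}. alpha N V i (T \<union> {j} \<union> {m}))
        / real (card {m \<in> N - (T \<union> {j}) - {i}. T \<union> {j} \<union> {m} \<notin> V} + 1)"
    by (rule alpha_losing_not_pivotal[OF finite_players T_j(1)])
       (use donation_iff T_j T i_in i_neq_j assms(2) in \<open>auto simp: grand insert_commute\<close>)
  ultimately show "alpha N V i (T \<union> {j}) = (\<Sum>m\<in>R. alpha N V i (T \<union> {j} \<union> {m})) / real (card R + 1)"
    by simp
  have "{m \<in> N - (T \<union> {j}) - {i}. T \<union> {j} \<union> {m} \<notin> W} = L"
    by (auto simp: L_def R_def)
  moreover have "alpha N W i (T \<union> {j})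
      = (\<Sum>m\<in>{m \<in> N - (T \<union> {j}) - {i}. T \<union> {j} \<union> {m} \<notin> W}. alpha N W i (T \<union> {j} \<union> {m}))
        / real (card {m \<in> N - (T \<union> {j}) - {i}. T \<union> {j} \<union> {m} \<notin> W} + 1)"
    by (rule alpha_losing_not_pivotal[OF finite_players T_j(1)])
       (use T_j T i_in i_neq_j assms(2) in \<open>auto simp: grand\<close>)
  ultimately show "alpha N W i (T \<union> {j}) = (\<Sum>m\<in>L. alpha N W i (T \<union> {j} \<union> {m})) / real (card L + 1)"
    by simp
  have "{m \<in> N - (T \<union> {i}) - {j}. T \<union> {i} \<union> {m} \<notin> W} = R"
    using T i_neq_j by (auto simp: R_def dest: blocker)
  moreover have "alpha N W j (T \<union> {i})
      = (\<Sum>m\<in>{m \<in> N - (T \<union> {i}) - {j}. T \<union> {i} \<union> {m} \<notin> W}. alpha N W j (T \<union> {i} \<union> {m}))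
        / real (card {m \<in> N - (T \<union> {i}) - {j}. T \<union> {i} \<union> {m} \<notin> W} + 1)"
    by (rule alpha_losing_not_pivotal[OF finite_players T_i(1)])
       (use T_i T j_in i_neq_j assms(2) in \<open>auto simp: grand insert_commute\<close>)
  ultimately show "alpha N W j (T \<union> {i}) = (\<Sum>m\<in>R. alpha N W j (T \<union> {i} \<union> {m})) / real (card R + 1)"
    by simp
qed

theorem donation_score_le:
  assumes "T \<subseteq> N - {i, j}" "T \<union> {i, j} \<notin> W"
  shows "alpha N V i (T \<union> {j}) \<le> alpha N W i (T \<union> {j}) + alpha N W j (T \<union> {i})"
  using assms
proof (induction "card (N - T)" arbitrary: T rule: less_induct)
  case less
  define R where "R = N - T - {i, j}"
  define L where "L = {m \<in> R. T \<union> {j} \<union> {m} \<notin> W}"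
  have "alpha N V i (T \<union> {j} \<union> {m})
      \<le> (if m \<in> L then alpha N W i (T \<union> {j} \<union> {m}) else 0) + alpha N W j (T \<union> {i} \<union> {m})"
    if m: "m \<in> R" for m
  proof -
    have U: "T \<union> {m} \<subseteq> N - {i, j}" using m less.prems(1) by (auto simp: R_def)
    have ext: "T \<union> {m} \<union> {j} = T \<union> {j} \<union> {m}" "T \<union> {m} \<union> {i} = T \<union> {i} \<union> {m}" by auto
    show ?thesis
    proof (cases "T \<union> {m} \<union> {i, j} \<in> W")
      case True
      moreover have "m \<in> L \<longleftrightarrow> T \<union> {j} \<union> {m} \<notin> W" using m by (simp add: L_def)
      ultimately show ?thesis
        using scores_le_if_grand_coalition_wins[OF U] unfolding ext
        by (cases "T \<union> {j} \<union> {m} \<in> W") simp_all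
    next
      case False
      have "card (N - (T \<union> {m})) < card (N - T)"
        using finite_players m by (intro psubset_card_mono) (auto simp: R_def)
      moreover have "m \<in> L"
        using mono[of "T \<union> {j} \<union> {m}" "T \<union> {m} \<union> {i, j}"] False m U i_in j_in
        by (auto simp: L_def)
      ultimately show ?thesis
        using less.hyps[OF _ U False] unfolding ext by simp
    qed
  qed
  moreover have "finite R" using finite_players by (simp add: R_def)
  moreover have "L \<subseteq> R" by (auto simp: L_def)
  ultimately show ?case
    unfolding scores_as_averages[OF less.prems, folded R_def, folded L_def]
    by (intro average_le_average_add alpha_nonneg)
qed

end

theorem claim2:
  fixes N :: "'a set" and W :: "'a set set" and i j :: 'a and S :: "'a set"
  assumes "svg N W"
    and "i \<in> N" and "j \<in> N" and "i \<noteq> j"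
    and "yes_blocker W j"
    and "S \<subseteq> N - {i, j}"
    and "S \<union> {i, j} \<notin> W"
  shows "alpha_no N (donation N W j i) i (S \<union> {j})
           \<le> alpha_no N W i (S \<union> {j}) + alpha_no N W j (S \<union> {i})"
proof -
  interpret blocker_donation N W "donation N W j i" i j
  proof
    show "U \<in> donation N W j i \<longleftrightarrow> i \<in> U \<and> U \<union> {j} \<in> W" if "U \<subseteq> N" for U
      using donation_iff_if_yes_blocker[OF assms(5) that] .
  qed (use assms in \<open>auto simp: svg_def yes_blocker_def\<close>)
  have "i \<notin> S \<union> {j}" "j \<notin> S \<union> {i}" using assms(4,6) by auto
  then show ?thesis
    using donation_score_le[OF assms(6,7)] by (simp add: alpha_no_def)
qed

end
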